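(* The following are equivalent for an integral domain $D$: (1) $D$ is a $\ast$-SH domain; (2) $D$ is of finite $\ast$-character and for every pair $P,Q$ of distinct maximal $\ast$-ideals of $D$, $P\cap Q$ contains no nonzero prime ideal.
   Context: $\ast$ is a star operation on $D$ of finite character. A $\ast$-ideal is a nonzero fractional ideal $I$ with $I^\ast=I$; it is of finite type if $I=J^\ast$ for some nonzero finitely generated $J$. A maximal $\ast$-ideal is an integral $\ast$-ideal maximal among proper integral $\ast$-ideals. $D$ is of finite $\ast$-character if every nonzero nonunit of $D$ lies in at most finitely many maximal $\ast$-ideals. A $\ast$-homog ideal is an integral $\ast$-ideal $I$ of finite type with $I\subsetneq D$ such that $(J+L)^{\ast}\neq D$ for every pair $J,L$ of proper integral $\ast$-ideals of finite type containing $I$. $D$ is a $\ast$-SH domain if for every nonzero nonunit $x\in D$, $xD=(I_1\cdots I_n)^\ast$ for some finitely many $\ast$-homog ideals $I_1,\dots,I_n$. *)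

theory Defs
  imports "HOL-Computational_Algebra.Fraction_Field"
begin

text \<open>The integral domain D is the type 'a :: idom; its quotient field K is 'a fract.
  D is identified with its image Dset in K.  All (fractional and integral) ideals are
  subsets of K.\<close>

definition emb :: "'a::idom \<Rightarrow> 'a fract" where
  "emb a = Fract a 1"

definition Dset :: "'a::idom fract set" where
  "Dset = range emb"

definition smult_set :: "'a::idom fract \<Rightarrow> 'a fract set \<Rightarrow> 'a fract set" where
  "smult_set x I = (\<lambda>y. x * y) ` I"

definition submod :: "'a::idom fract set \<Rightarrow> bool" where
  "submod I \<longleftrightarrow> 0 \<in> I \<and> (\<forall>a\<in>I. \<forall>b\<in>I. a + b \<in> I) \<and> (\<forall>d\<in>Dset. \<forall>a\<in>I. d * a \<in> I)"

definition frac_ideal :: "'a::idom fract set \<Rightarrow> bool" where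
  "frac_ideal I \<longleftrightarrow> submod I \<and> I \<noteq> {0} \<and>
     (\<exists>d\<in>Dset. d \<noteq> 0 \<and> smult_set d I \<subseteq> Dset)"

definition gen :: "'a::idom fract set \<Rightarrow> 'a fract set" where
  "gen S = {\<Sum>s\<in>S. emb (c s) * s | c. True}"

definition fin_gen :: "'a::idom fract set \<Rightarrow> bool" where
  "fin_gen J \<longleftrightarrow> (\<exists>S. finite S \<and> J = gen S)"

definition star_operation :: "('a::idom fract set \<Rightarrow> 'a fract set) \<Rightarrow> bool" where
  "star_operation st \<longleftrightarrow>
     (\<forall>I. frac_ideal I \<longrightarrow> frac_ideal (st I)) \<and>
     (\<forall>x. x \<noteq> 0 \<longrightarrow> st (smult_set x Dset) = smult_set x Dset) \<and>
     (\<forall>x I. x \<noteq> 0 \<longrightarrow> frac_ideal I \<longrightarrow> st (smult_set x I) = smult_set x (st I)) \<and>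
     (\<forall>I J. frac_ideal I \<longrightarrow> frac_ideal J \<longrightarrow> I \<subseteq> J \<longrightarrow> st I \<subseteq> st J) \<and>
     (\<forall>I. frac_ideal I \<longrightarrow> I \<subseteq> st I) \<and>
     (\<forall>I. frac_ideal I \<longrightarrow> st (st I) = st I)"

definition finite_character :: "('a::idom fract set \<Rightarrow> 'a fract set) \<Rightarrow> bool" where
  "finite_character st \<longleftrightarrow>
     (\<forall>I. frac_ideal I \<longrightarrow>
        st I = \<Union>{st J | J. frac_ideal J \<and> fin_gen J \<and> J \<subseteq> I})"

definition integral :: "'a::idom fract set \<Rightarrow> bool" where
  "integral I \<longleftrightarrow> I \<subseteq> Dset"

definition star_ideal :: "('a::idom fract set \<Rightarrow> 'a fract set) \<Rightarrow> 'a fract set \<Rightarrow> bool" where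
  "star_ideal st I \<longleftrightarrow> frac_ideal I \<and> st I = I"

definition finite_type :: "('a::idom fract set \<Rightarrow> 'a fract set) \<Rightarrow> 'a fract set \<Rightarrow> bool" where
  "finite_type st I \<longleftrightarrow> (\<exists>J. frac_ideal J \<and> fin_gen J \<and> I = st J)"

definition max_star_ideal :: "('a::idom fract set \<Rightarrow> 'a fract set) \<Rightarrow> 'a fract set \<Rightarrow> bool" where
  "max_star_ideal st M \<longleftrightarrow> integral M \<and> star_ideal st M \<and> M \<noteq> Dset \<and>
     (\<forall>N. integral N \<and> star_ideal st N \<and> N \<noteq> Dset \<and> M \<subseteq> N \<longrightarrow> N = M)"

definition finite_star_character :: "('a::idom fract set \<Rightarrow> 'a fract set) \<Rightarrow> bool" where
  "finite_star_character st \<longleftrightarrow>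
     (\<forall>x. x \<noteq> 0 \<longrightarrow> \<not> x dvd 1 \<longrightarrow> finite {M. max_star_ideal st M \<and> emb x \<in> M})"

definition ideal_sum :: "'a::idom fract set \<Rightarrow> 'a fract set \<Rightarrow> 'a fract set" where
  "ideal_sum I J = {a + b | a b. a \<in> I \<and> b \<in> J}"

definition ideal_prod :: "'a::idom fract set \<Rightarrow> 'a fract set \<Rightarrow> 'a fract set" where
  "ideal_prod I J = {sum_list (map (\<lambda>(a, b). a * b) xs) | xs. set xs \<subseteq> I \<times> J}"

definition ideal_prod_list :: "'a::idom fract set list \<Rightarrow> 'a fract set" where
  "ideal_prod_list Is = foldr ideal_prod Is Dset"

definition star_homog :: "('a::idom fract set \<Rightarrow> 'a fract set) \<Rightarrow> 'a fract set \<Rightarrow> bool" where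
  "star_homog st I \<longleftrightarrow> integral I \<and> star_ideal st I \<and> finite_type st I \<and> I \<noteq> Dset \<and>
     (\<forall>J L. integral J \<and> star_ideal st J \<and> finite_type st J \<and> J \<noteq> Dset \<and> I \<subseteq> J \<and>
            integral L \<and> star_ideal st L \<and> finite_type st L \<and> L \<noteq> Dset \<and> I \<subseteq> L \<longrightarrow>
            st (ideal_sum J L) \<noteq> Dset)"

definition star_SH :: "('a::idom fract set \<Rightarrow> 'a fract set) \<Rightarrow> bool" where
  "star_SH st \<longleftrightarrow>
     (\<forall>x. x \<noteq> 0 \<longrightarrow> \<not> x dvd 1 \<longrightarrow>
        (\<exists>Is. (\<forall>I\<in>set Is. star_homog st I) \<and>
              smult_set (emb x) Dset = st (ideal_prod_list Is)))"

definition nonzero_prime_ideal :: "'a::idom fract set \<Rightarrow> bool" where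
  "nonzero_prime_ideal P \<longleftrightarrow> integral P \<and> submod P \<and> P \<noteq> {0} \<and> P \<noteq> Dset \<and>
     (\<forall>a\<in>Dset. \<forall>b\<in>Dset. a * b \<in> P \<longrightarrow> a \<in> P \<or> b \<in> P)"

end

theory Submission
  imports Defs "HOL.Hull" "HOL-Library.Set_Algebras"
begin

text \<open>A star-homogeneous ideal lies in exactly one maximal star ideal: if it lay in two, they
  are comaximal, and finite character lets one enlarge it to finite-type star ideals inside
  each whose sum is not proper. Hence in \<open>xD = (I\<^sub>1 \<cdots> I\<^sub>n)\<^sup>*\<close> every maximal star ideal
  containing \<open>x\<close> contains some \<open>I\<^sub>i\<close> and is determined by it, giving finite star character,
  and a nonzero prime inside \<open>P \<inter> Q\<close> would contain some \<open>I\<^sub>i\<close>, forcing \<open>P = Q\<close>.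

  Conversely, let \<open>M\<^sub>1, \<dots>, M\<^sub>n\<close> be the maximal star ideals containing \<open>x\<close>. Since
  \<open>M\<^sub>i \<inter> M\<^sub>j\<close> contains no nonzero prime, \<open>xD\<close> meets the multiplicative set
  \<open>(D - M\<^sub>i)(D - M\<^sub>j)\<close>: there are \<open>s\<^sub>i\<^sub>j \<notin> M\<^sub>i\<close>, \<open>t\<^sub>i\<^sub>j \<notin> M\<^sub>j\<close> with \<open>s\<^sub>i\<^sub>j t\<^sub>i\<^sub>j \<in> xD\<close>.
  Then \<open>I\<^sub>i = (x, t\<^sub>i\<^sub>j : j \<noteq> i)\<^sup>*\<close> lies in \<open>M\<^sub>i\<close> only, hence is homogeneous, and
  \<open>xD = (I\<^sub>1 \<cdots> I\<^sub>n)\<^sup>*\<close> because both inclusions can be checked at each maximal star ideal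
  containing \<open>x\<close>, where \<open>s\<^sub>i\<^sub>j\<close> and the \<open>t\<^sub>j\<^sub>i\<close> are units.\<close>

lemma emb_add: "emb a + emb b = emb (a + b)"
  by (simp add: emb_def)

lemma emb_mult: "emb a * emb b = emb (a * b)"
  by (simp add: emb_def)

lemma emb_0 [simp]: "emb 0 = 0"
  by (simp add: emb_def Zero_fract_def)

lemma emb_1 [simp]: "emb 1 = 1"
  by (simp add: emb_def One_fract_def)

lemma emb_eq_iff [simp]: "emb a = emb b \<longleftrightarrow> a = b"
  by (simp add: emb_def eq_fract)

lemma emb_eq_0_iff [simp]: "emb a = 0 \<longleftrightarrow> a = 0"
  using emb_eq_iff[of a 0] by simp

lemma Dset_emb [simp]: "emb a \<in> Dset"
  by (simp add: Dset_def)

lemma Dset_0 [simp]: "0 \<in> Dset" and Dset_1 [simp]: "1 \<in> Dset"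
  using Dset_emb[of 0] Dset_emb[of 1] by simp_all

lemma Dset_add: "a \<in> Dset \<Longrightarrow> b \<in> Dset \<Longrightarrow> a + b \<in> Dset"
  by (auto simp: Dset_def emb_add)

lemma Dset_mult: "a \<in> Dset \<Longrightarrow> b \<in> Dset \<Longrightarrow> a * b \<in> Dset"
  by (auto simp: Dset_def emb_mult)

lemma Dset_power: "a \<in> Dset \<Longrightarrow> a ^ n \<in> Dset"
  by (induction n) (auto intro: Dset_mult)

lemma exists_denominator: "\<exists>d\<in>Dset. d \<noteq> 0 \<and> d * z \<in> Dset"
proof (cases z)
  case (Fract a b)
  then have "emb b * z = emb a"
    by (simp add: emb_def eq_fract mult.commute)
  with Fract show ?thesis
    by (metis Dset_emb emb_eq_0_iff)
qed

lemma smult_set_1 [simp]: "smult_set 1 I = I"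
  by (simp add: smult_set_def)

lemma smult_setI: "y \<in> I \<Longrightarrow> x * y \<in> smult_set x I"
  by (auto simp: smult_set_def)

lemma smult_set_self: "x \<in> smult_set x Dset"
  using smult_setI[OF Dset_1, of x] by simp

lemma smult_set_smult_set: "smult_set x (smult_set y I) = smult_set (x * y) I"
  by (auto simp: smult_set_def image_image mult.assoc)

lemma smult_set_mono: "I \<subseteq> J \<Longrightarrow> smult_set x I \<subseteq> smult_set x J"
  by (auto simp: smult_set_def)

lemma submod_0: "submod I \<Longrightarrow> 0 \<in> I"
  and submod_add: "submod I \<Longrightarrow> a \<in> I \<Longrightarrow> b \<in> I \<Longrightarrow> a + b \<in> I"
  and submod_mult: "submod I \<Longrightarrow> d \<in> Dset \<Longrightarrow> a \<in> I \<Longrightarrow> d * a \<in> I"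
  by (simp_all add: submod_def)

lemma submod_Dset: "submod Dset"
  by (simp add: submod_def Dset_add Dset_mult)

lemma submod_Inter: "\<forall>I\<in>F. submod I \<Longrightarrow> submod (\<Inter>F)"
  by (simp add: submod_def)

lemma submod_Union_chain:
  assumes "subset.chain {I. submod I} C" "C \<noteq> {}"
  shows "submod (\<Union>C)"
  unfolding submod_def
proof (intro conjI ballI)
  obtain X where "X \<in> C"
    using assms(2) by blast
  with assms(1) show "0 \<in> \<Union>C"
    unfolding subset.chain_def by (blast intro: submod_0)
  fix a b assume "a \<in> \<Union>C" "b \<in> \<Union>C"
  then obtain X Y where "X \<in> C" "Y \<in> C" "a \<in> X" "b \<in> Y"
    by auto
  with assms(1) have "a \<in> X \<and> b \<in> X \<or> a \<in> Y \<and> b \<in> Y"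
    by (auto simp: subset.chain_def)
  with assms(1) \<open>X \<in> C\<close> \<open>Y \<in> C\<close> show "a + b \<in> \<Union>C"
    by (auto simp: subset.chain_def intro: submod_add)
next
  fix d a :: "'a fract" assume "d \<in> Dset" "a \<in> \<Union>C"
  with assms(1) show "d * a \<in> \<Union>C"
    by (auto simp: subset.chain_def intro: submod_mult)
qed

lemma submod_smult_set:
  assumes "submod I"
  shows "submod (smult_set x I)"
  unfolding submod_def
proof (intro conjI ballI)
  show "0 \<in> smult_set x I"
    using smult_setI[OF submod_0[OF assms], of x] by simp
next
  fix u v assume "u \<in> smult_set x I" "v \<in> smult_set x I"
  then obtain a b where "a \<in> I" "b \<in> I" "u = x * a" "v = x * b"
    by (auto simp: smult_set_def)
  then show "u + v \<in> smult_set x I"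
    using smult_setI[OF submod_add[OF assms], of a b x] by (simp add: distrib_left)
next
  fix d u :: "'a fract" assume "d \<in> Dset" "u \<in> smult_set x I"
  then obtain a where "a \<in> I" "u = x * a"
    by (auto simp: smult_set_def)
  then show "d * u \<in> smult_set x I"
    using smult_setI[OF submod_mult[OF assms \<open>d \<in> Dset\<close>], of a x] by (simp add: mult.left_commute)
qed

lemma submod_sum:
  assumes "submod I" "finite A" "\<And>a. a \<in> A \<Longrightarrow> f a \<in> I"
  shows "sum f A \<in> I"
  using assms(2,3) by (induction A rule: finite_induct) (auto intro: submod_0[OF assms(1)] submod_add[OF assms(1)])

lemma submod_eq_DsetI: "submod I \<Longrightarrow> integral I \<Longrightarrow> 1 \<in> I \<Longrightarrow> I = Dset"
  unfolding integral_def by (auto dest: submod_mult[of I _ 1])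

lemma principal_subset: "submod I \<Longrightarrow> x \<in> I \<Longrightarrow> smult_set x Dset \<subseteq> I"
  by (auto simp: smult_set_def mult.commute intro: submod_mult)

lemma submod_hull: "submod (submod hull S)"
  by (rule hull_in) (rule submod_Inter)

lemma gen_eq_hull:
  assumes "finite S"
  shows "gen S = submod hull S"
proof (rule hull_unique[symmetric])
  show "S \<subseteq> gen S"
  proof
    fix t assume "t \<in> S"
    have "(\<Sum>s\<in>S. emb (if s = t then 1 else 0) * s) = (\<Sum>s\<in>S. if s = t then s else 0)"
      by (rule sum.cong) auto
    with \<open>t \<in> S\<close> have "(\<Sum>s\<in>S. emb (if s = t then 1 else 0) * s) = t"
      using assms by simp
    then show "t \<in> gen S"
      unfolding gen_def by (intro CollectI exI[of _ "\<lambda>s. if s = t then 1 else 0"]) simp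
  qed
  show "submod (gen S)"
    unfolding submod_def gen_def
  proof (intro conjI ballI)
    show "0 \<in> {\<Sum>s\<in>S. emb (c s) * s |c. True}"
      by (auto intro!: exI[of _ "\<lambda>_. 0"])
  next
    fix a b assume "a \<in> {\<Sum>s\<in>S. emb (c s) * s |c. True}" "b \<in> {\<Sum>s\<in>S. emb (c s) * s |c. True}"
    then obtain c1 c2 where "a = (\<Sum>s\<in>S. emb (c1 s) * s)" "b = (\<Sum>s\<in>S. emb (c2 s) * s)"
      by auto
    then have "a + b = (\<Sum>s\<in>S. emb (c1 s + c2 s) * s)"
      by (simp add: sum.distrib emb_add[symmetric] distrib_right)
    then show "a + b \<in> {\<Sum>s\<in>S. emb (c s) * s |c. True}"
      by (intro CollectI exI[of _ "\<lambda>s. c1 s + c2 s"]) simp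
  next
    fix d a :: "'a fract" assume "d \<in> Dset" "a \<in> {\<Sum>s\<in>S. emb (c s) * s |c. True}"
    then obtain e c where "d = emb e" "a = (\<Sum>s\<in>S. emb (c s) * s)"
      by (auto simp: Dset_def)
    then have "d * a = (\<Sum>s\<in>S. emb (e * c s) * s)"
      by (simp add: sum_distrib_left emb_mult[symmetric] mult.assoc)
    then show "d * a \<in> {\<Sum>s\<in>S. emb (c s) * s |c. True}"
      by (intro CollectI exI[of _ "\<lambda>s. e * c s"]) simp
  qed
  show "gen S \<subseteq> C" if "S \<subseteq> C" "submod C" for C
  proof
    fix a assume "a \<in> gen S"
    then obtain c where "a = (\<Sum>s\<in>S. emb (c s) * s)"
      by (auto simp: gen_def)
    then show "a \<in> C"
      using that assms by (auto intro!: submod_sum submod_mult)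
  qed
qed

lemma frac_ideal_submod: "frac_ideal I \<Longrightarrow> submod I"
  by (simp add: frac_ideal_def)

lemma frac_ideal_nonzero: "frac_ideal I \<Longrightarrow> \<exists>a\<in>I. a \<noteq> 0"
  unfolding frac_ideal_def submod_def by auto

lemma frac_idealI_integral: "submod I \<Longrightarrow> integral I \<Longrightarrow> a \<in> I \<Longrightarrow> a \<noteq> 0 \<Longrightarrow> frac_ideal I"
  unfolding frac_ideal_def integral_def by (auto intro!: bexI[of _ 1])

lemma frac_ideal_Dset: "frac_ideal Dset"
  using frac_idealI_integral[OF submod_Dset _ Dset_1] by (simp add: integral_def)

lemma frac_ideal_smult_set:
  assumes "frac_ideal I" "x \<noteq> 0"
  shows "frac_ideal (smult_set x I)"
proof -
  obtain d where d: "d \<in> Dset" "d \<noteq> 0" "smult_set d I \<subseteq> Dset"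
    using assms(1) unfolding frac_ideal_def by auto
  obtain e where e: "e \<in> Dset" "e \<noteq> 0" "e * x \<in> Dset"
    using exists_denominator by blast
  obtain a where a: "a \<in> I" "a \<noteq> 0"
    using frac_ideal_nonzero[OF assms(1)] by auto
  have "smult_set (e * d) (smult_set x I) \<subseteq> Dset"
  proof
    fix z assume "z \<in> smult_set (e * d) (smult_set x I)"
    then obtain y where y: "y \<in> I" "z = (e * x) * (d * y)"
      by (auto simp: smult_set_def algebra_simps)
    have "d * y \<in> Dset"
      using d(3) y(1) by (auto simp: smult_set_def)
    with y e show "z \<in> Dset"
      by (simp add: Dset_mult)
  qed
  moreover have "x * a \<in> smult_set x I" "x * a \<noteq> 0"
    using a assms(2) by (auto simp: smult_setI)
  ultimately show ?thesis
    using assms d e submod_smult_set unfolding frac_ideal_def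
    by (metis Dset_mult no_zero_divisors singletonD)
qed

lemma gen_subset: "finite S \<Longrightarrow> S \<subseteq> gen S"
  by (simp add: gen_eq_hull hull_subset)

lemma submod_gen: "finite S \<Longrightarrow> submod (gen S)"
  by (simp add: gen_eq_hull submod_hull)

lemma gen_least: "finite S \<Longrightarrow> S \<subseteq> I \<Longrightarrow> submod I \<Longrightarrow> gen S \<subseteq> I"
  by (simp add: gen_eq_hull hull_minimal)

lemma gen_mono: "finite T \<Longrightarrow> S \<subseteq> T \<Longrightarrow> gen S \<subseteq> gen T"
  by (simp add: gen_eq_hull hull_mono finite_subset)

lemma submod_ideal_sum:
  assumes "submod A" "submod B"
  shows "submod (ideal_sum A B)"
  unfolding submod_def ideal_sum_def
proof (intro conjI ballI)
  show "0 \<in> {a + b |a b. a \<in> A \<and> b \<in> B}"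
    using assms by (auto simp: submod_0 intro!: exI[of _ 0])
next
  fix u v assume "u \<in> {a + b |a b. a \<in> A \<and> b \<in> B}" "v \<in> {a + b |a b. a \<in> A \<and> b \<in> B}"
  then obtain a b a' b' where "a \<in> A" "b \<in> B" "a' \<in> A" "b' \<in> B" "u = a + b" "v = a' + b'"
    by auto
  moreover have "u + v = (a + a') + (b + b')"
    using calculation by (simp add: algebra_simps)
  ultimately show "u + v \<in> {a + b |a b. a \<in> A \<and> b \<in> B}"
    using assms by (intro CollectI exI[of _ "a + a'"] exI[of _ "b + b'"]) (auto intro: submod_add)
next
  fix d u :: "'a fract" assume "d \<in> Dset" "u \<in> {a + b |a b. a \<in> A \<and> b \<in> B}"
  then obtain a b where "a \<in> A" "b \<in> B" "u = a + b"
    by auto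
  moreover have "d * u = d * a + d * b"
    using calculation by (simp add: algebra_simps)
  ultimately show "d * u \<in> {a + b |a b. a \<in> A \<and> b \<in> B}"
    using assms \<open>d \<in> Dset\<close> by (auto intro: submod_mult)
qed

lemma ideal_sum_upper1: "submod B \<Longrightarrow> A \<subseteq> ideal_sum A B"
  unfolding ideal_sum_def by (force simp: submod_0)

lemma ideal_sum_upper2: "submod A \<Longrightarrow> B \<subseteq> ideal_sum A B"
  unfolding ideal_sum_def by (force simp: submod_0)

lemma ideal_sum_least: "submod C \<Longrightarrow> A \<subseteq> C \<Longrightarrow> B \<subseteq> C \<Longrightarrow> ideal_sum A B \<subseteq> C"
  unfolding ideal_sum_def by (auto intro: submod_add)

lemma ideal_prod_eq_hull:
  assumes "submod B"
  shows "ideal_prod A B = submod hull (A * B)"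
proof (rule hull_unique[symmetric])
  have sum_mem: "sum_list (map (\<lambda>(a, b). a * b) xs) \<in> C"
    if "submod C" "A * B \<subseteq> C" "set xs \<subseteq> A \<times> B" for C xs
  proof -
    have "a * b \<in> C" if "a \<in> A" "b \<in> B" for a b
      using that \<open>A * B \<subseteq> C\<close> by blast
    with that(3) show ?thesis
      by (induction xs) (auto intro: submod_0[OF that(1)] submod_add[OF that(1)])
  qed
  show "A * B \<subseteq> ideal_prod A B"
    unfolding ideal_prod_def by (auto elim!: set_times_elim intro!: exI[of _ "[(a, b)]" for a b])
  show "ideal_prod A B \<subseteq> C" if "A * B \<subseteq> C" "submod C" for C
    using sum_mem[OF that(2,1)] unfolding ideal_prod_def by blast
  show "submod (ideal_prod A B)"
    unfolding submod_def
  proof (intro conjI ballI)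
    show "0 \<in> ideal_prod A B"
      unfolding ideal_prod_def by (intro CollectI exI[of _ "[]"]) auto
  next
    fix u v assume "u \<in> ideal_prod A B" "v \<in> ideal_prod A B"
    then obtain xs ys where "set xs \<subseteq> A \<times> B" "set ys \<subseteq> A \<times> B"
      "u = sum_list (map (\<lambda>(a, b). a * b) xs)" "v = sum_list (map (\<lambda>(a, b). a * b) ys)"
      unfolding ideal_prod_def by auto
    then show "u + v \<in> ideal_prod A B"
      unfolding ideal_prod_def by (intro CollectI exI[of _ "xs @ ys"]) auto
  next
    fix d u :: "'a fract" assume d: "d \<in> Dset" and "u \<in> ideal_prod A B"
    then obtain xs where xs: "set xs \<subseteq> A \<times> B" "u = sum_list (map (\<lambda>(a, b). a * b) xs)"
      unfolding ideal_prod_def by auto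
    have "d * u = sum_list (map (\<lambda>(a, b). a * b) (map (\<lambda>(a, b). (a, d * b)) xs))"
      unfolding xs(2) by (induction xs) (auto simp: algebra_simps)
    moreover have "set (map (\<lambda>(a, b). (a, d * b)) xs) \<subseteq> A \<times> B"
      using xs(1) d by (auto intro: submod_mult[OF assms])
    ultimately show "d * u \<in> ideal_prod A B"
      unfolding ideal_prod_def by blast
  qed
qed

lemma submod_ideal_prod: "submod B \<Longrightarrow> submod (ideal_prod A B)"
  by (simp add: ideal_prod_eq_hull submod_hull)

lemma ideal_prod_commute: "submod A \<Longrightarrow> submod B \<Longrightarrow> ideal_prod A B = ideal_prod B A"
  by (simp add: ideal_prod_eq_hull mult.commute)

lemma ideal_prod_mono: "A \<subseteq> A' \<Longrightarrow> B \<subseteq> B' \<Longrightarrow> ideal_prod A B \<subseteq> ideal_prod A' B'"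
  unfolding ideal_prod_def by blast

lemma ideal_prod_memI: "submod B \<Longrightarrow> a \<in> A \<Longrightarrow> b \<in> B \<Longrightarrow> a * b \<in> ideal_prod A B"
  by (auto simp: ideal_prod_eq_hull intro: hull_inc)

lemma ideal_prod_hull: "ideal_prod (submod hull S) (submod hull T) = submod hull (S * T)"
proof -
  have "a * b \<in> submod hull (S * T)" if a: "a \<in> submod hull S" and b: "b \<in> submod hull T" for a b
  proof -
    have Sb: "s * b \<in> submod hull (S * T)" if "s \<in> S" for s
      using b
    proof (rule hull_induct)
      show "submod {b. s * b \<in> submod hull (S * T)}"
        using submod_hull[of "S * T"]
        by (auto simp: submod_def distrib_left mult.left_commute)
    qed (use that in \<open>auto intro: hull_inc\<close>)
    from a show ?thesis
    proof (rule hull_induct)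
      show "submod {a. a * b \<in> submod hull (S * T)}"
        using submod_hull[of "S * T"]
        by (auto simp: submod_def distrib_right mult.assoc)
    qed (rule Sb)
  qed
  then have "submod hull S * submod hull T \<subseteq> submod hull (S * T)"
    by (auto elim: set_times_elim)
  moreover have "S * T \<subseteq> submod hull S * submod hull T"
    by (intro set_times_mono2 hull_subset)
  ultimately show ?thesis
    by (metis ideal_prod_eq_hull submod_hull hull_hull hull_mono subset_antisym)
qed

lemma hull_one: "submod hull {1} = Dset"
proof (rule hull_unique)
  show "Dset \<subseteq> C" if "{1} \<subseteq> C" "submod C" for C
    using that submod_mult[of C _ 1] by auto
qed (simp_all add: submod_Dset)

lemma ideal_prod_list_hull:
  "ideal_prod_list (map (\<lambda>i. submod hull G i) is) = submod hull prod_list (map G is)"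
  by (induction "is") (simp_all add: ideal_prod_list_def hull_one ideal_prod_hull)

lemma prod_list_mem_prod_list_sets:
  "(\<And>i. i \<in> set is \<Longrightarrow> h i \<in> G i) \<Longrightarrow> prod_list (map h is) \<in> prod_list (map G is)"
  by (induction "is") auto

lemma prod_list_sets_subset_Dset:
  "(\<And>i. i \<in> set is \<Longrightarrow> G i \<subseteq> Dset) \<Longrightarrow> prod_list (map G is) \<subseteq> Dset"
  by (induction "is") (auto elim!: set_times_elim intro: Dset_mult)

lemma prod_list_sets_factor:
  assumes "p \<in> prod_list (map G is)" "i \<in> set is" "\<And>j. j \<in> set is \<Longrightarrow> G j \<subseteq> Dset"
  shows "\<exists>g\<in>G i. \<exists>q\<in>Dset. p = g * q"
  using assms
proof (induction "is" arbitrary: p)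
  case (Cons j "is")
  then obtain a r where ar: "p = a * r" "a \<in> G j" "r \<in> prod_list (map G is)"
    by (auto elim: set_times_elim)
  show ?case
  proof (cases "i = j")
    case True
    then show ?thesis
      using ar prod_list_sets_subset_Dset[of "is" G] Cons.prems(3) by auto
  next
    case False
    then have "i \<in> set is"
      using Cons.prems(2) by simp
    then obtain g q where "g \<in> G i" "q \<in> Dset" "r = g * q"
      using Cons.IH[OF ar(3)] Cons.prems(3) by force
    moreover have "a \<in> Dset"
      using ar(2) Cons.prems(3) by auto
    ultimately show ?thesis
      using ar(1) by (intro bexI[of _ g] bexI[of _ "a * q"]) (auto simp: mult_ac intro: Dset_mult)
  qed
qed simp

subsection \<open>Integral ideals and prime ideals\<close>

definition int_ideal :: "'a::idom fract set \<Rightarrow> bool" where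
  "int_ideal I \<longleftrightarrow> frac_ideal I \<and> integral I"

lemma int_ideal_submod: "int_ideal I \<Longrightarrow> submod I"
  by (simp add: int_ideal_def frac_ideal_submod)

lemma int_idealI: "submod I \<Longrightarrow> I \<subseteq> Dset \<Longrightarrow> a \<in> I \<Longrightarrow> a \<noteq> 0 \<Longrightarrow> int_ideal I"
  by (simp add: int_ideal_def integral_def frac_idealI_integral)

lemma int_ideal_Dset: "int_ideal Dset"
  by (simp add: int_ideal_def frac_ideal_Dset integral_def)

lemma int_ideal_principal: "x \<in> Dset \<Longrightarrow> x \<noteq> 0 \<Longrightarrow> int_ideal (smult_set x Dset)"
  by (intro int_idealI[OF submod_smult_set[OF submod_Dset] _ smult_set_self])
     (auto simp: smult_set_def intro: Dset_mult)

lemma int_ideal_gen: "finite T \<Longrightarrow> T \<subseteq> Dset \<Longrightarrow> a \<in> gen T \<Longrightarrow> a \<noteq> 0 \<Longrightarrow> int_ideal (gen T)"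
  by (simp add: int_idealI submod_gen gen_least submod_Dset)

lemma int_ideal_ideal_prod:
  assumes "int_ideal A" "int_ideal B"
  shows "int_ideal (ideal_prod A B)"
proof -
  obtain a b where "a \<in> A" "b \<in> B" "a \<noteq> 0" "b \<noteq> 0"
    using assms frac_ideal_nonzero unfolding int_ideal_def by meson
  moreover have "ideal_prod A B \<subseteq> Dset"
    using assms unfolding ideal_prod_eq_hull[OF int_ideal_submod[OF assms(2)]]
    by (intro hull_minimal submod_Dset) (auto simp: int_ideal_def integral_def elim!: set_times_elim intro: Dset_mult)
  ultimately show ?thesis
    using assms by (metis int_idealI int_ideal_submod ideal_prod_memI no_zero_divisors submod_ideal_prod)
qed

lemma int_ideal_ideal_prod_list: "\<forall>I\<in>set Is. int_ideal I \<Longrightarrow> int_ideal (ideal_prod_list Is)"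
  by (induction Is) (auto simp: ideal_prod_list_def int_ideal_Dset int_ideal_ideal_prod)

lemma int_ideal_ideal_sum:
  assumes "int_ideal A" "int_ideal B"
  shows "int_ideal (ideal_sum A B)"
proof -
  obtain a where "a \<in> A" "a \<noteq> 0"
    using assms(1) frac_ideal_nonzero unfolding int_ideal_def by meson
  moreover have "ideal_sum A B \<subseteq> Dset"
    using assms by (intro ideal_sum_least submod_Dset) (auto simp: int_ideal_def integral_def)
  ultimately show ?thesis
    using assms ideal_sum_upper1
    by (metis int_idealI int_ideal_submod submod_ideal_sum subsetD)
qed

definition prime_ideal :: "'a::idom fract set \<Rightarrow> bool" where
  "prime_ideal P \<longleftrightarrow> submod P \<and> integral P \<and> 1 \<notin> P \<and>
     (\<forall>a\<in>Dset. \<forall>b\<in>Dset. a * b \<in> P \<longrightarrow> a \<in> P \<or> b \<in> P)"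

lemma nonzero_prime_ideal_iff: "nonzero_prime_ideal P \<longleftrightarrow> prime_ideal P \<and> P \<noteq> {0}"
  unfolding nonzero_prime_ideal_def prime_ideal_def
  by (auto dest: submod_eq_DsetI)

lemma prime_idealD:
  "prime_ideal P \<Longrightarrow> a \<in> Dset \<Longrightarrow> b \<in> Dset \<Longrightarrow> a * b \<in> P \<Longrightarrow> a \<in> P \<or> b \<in> P"
  by (simp add: prime_ideal_def)

lemma prime_ideal_mult_notin:
  "prime_ideal P \<Longrightarrow> a \<in> Dset \<Longrightarrow> b \<in> Dset \<Longrightarrow> a \<notin> P \<Longrightarrow> b \<notin> P \<Longrightarrow> a * b \<notin> P"
  using prime_idealD by blast

lemma prime_ideal_power:
  assumes "prime_ideal P" "x \<in> Dset" "x ^ k \<in> P"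
  shows "x \<in> P"
  using assms(3)
proof (induction k)
  case 0
  with assms(1) show ?case
    by (simp add: prime_ideal_def)
next
  case (Suc k)
  with assms show ?case
    by (auto dest: prime_idealD[OF assms(1) _ Dset_power])
qed

lemma prime_ideal_prod_notin:
  assumes "prime_ideal P" "finite F" "\<And>a. a \<in> F \<Longrightarrow> f a \<in> Dset \<and> f a \<notin> P"
  shows "prod f F \<in> Dset \<and> prod f F \<notin> P"
  using assms(2,3)
proof (induction F rule: finite_induct)
  case empty
  with assms(1) show ?case
    by (simp add: prime_ideal_def)
next
  case (insert a F)
  then show ?case
    by (auto simp: Dset_mult prime_ideal_mult_notin[OF assms(1)])
qed

lemma prime_ideal_ideal_prod_list:
  assumes "prime_ideal P" "\<forall>I\<in>set Is. int_ideal I" "ideal_prod_list Is \<subseteq> P"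
  shows "\<exists>I\<in>set Is. I \<subseteq> P"
  using assms(2,3)
proof (induction Is)
  case Nil
  with assms(1) show ?case
    by (auto simp: ideal_prod_list_def prime_ideal_def dest: subsetD[of _ _ 1])
next
  case (Cons I Is)
  let ?Q = "ideal_prod_list Is"
  have Q: "int_ideal ?Q"
    using Cons.prems by (intro int_ideal_ideal_prod_list) simp
  show ?case
  proof (cases "I \<subseteq> P")
    case False
    then obtain a where a: "a \<in> I" "a \<notin> P"
      by auto
    have "?Q \<subseteq> P"
    proof
      fix b assume b: "b \<in> ?Q"
      have "a * b \<in> P"
        using Cons.prems ideal_prod_memI[OF int_ideal_submod[OF Q] a(1) b]
        by (auto simp: ideal_prod_list_def)
      moreover have "a \<in> Dset" "b \<in> Dset"
        using a b Cons.prems Q by (auto simp: int_ideal_def integral_def)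
      ultimately show "b \<in> P"
        using a prime_idealD[OF assms(1)] by blast
    qed
    with Cons show ?thesis
      by auto
  qed simp
qed

lemma exists_max_disjoint_ideal:
  assumes "submod I" "I \<subseteq> Dset" "I \<inter> U = {}"
  obtains P where "submod P" "P \<subseteq> Dset" "I \<subseteq> P" "P \<inter> U = {}"
    "\<And>A. submod A \<Longrightarrow> A \<subseteq> Dset \<Longrightarrow> P \<subseteq> A \<Longrightarrow> A \<inter> U = {} \<Longrightarrow> A = P"
proof -
  let ?F = "{A. submod A \<and> A \<subseteq> Dset \<and> I \<subseteq> A \<and> A \<inter> U = {}}"
  have "I \<in> ?F"
    using assms by simp
  then have "?F \<noteq> {}"
    by blast
  moreover have "\<Union>C \<in> ?F" if C: "C \<noteq> {}" "subset.chain ?F C" for C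
  proof -
    have CX: "submod X" "X \<subseteq> Dset" "I \<subseteq> X" "X \<inter> U = {}" if "X \<in> C" for X
      using C(2) that by (auto simp: subset.chain_def)
    have "C \<subseteq> {A. submod A}"
      using CX(1) by blast
    then have "subset.chain {A. submod A} C"
      using C(2) by (simp add: subset.chain_def)
    then have "submod (\<Union>C)"
      using C(1) by (rule submod_Union_chain)
    moreover have "\<Union>C \<subseteq> Dset"
      using CX(2) by blast
    moreover have "I \<subseteq> \<Union>C"
      using C(1) CX(3) by blast
    moreover have "\<Union>C \<inter> U = {}"
      using CX(4) by blast
    ultimately show ?thesis
      by simp
  qed
  ultimately have "\<exists>P\<in>?F. \<forall>A\<in>?F. P \<subseteq> A \<longrightarrow> A = P"
    by (rule subset_Zorn_nonempty)
  then obtain P where P: "P \<in> ?F" and max: "\<forall>A\<in>?F. P \<subseteq> A \<longrightarrow> A = P"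
    by (elim bexE)
  show thesis
  proof (rule that)
    fix A assume "submod A" "A \<subseteq> Dset" "P \<subseteq> A" "A \<inter> U = {}"
    moreover have "I \<subseteq> A"
      using P \<open>P \<subseteq> A\<close> by blast
    ultimately show "A = P"
      using max by simp
  qed (use P in simp_all)
qed

lemma prime_ideal_if_max_disjoint:
  assumes U: "1 \<in> U" "\<And>u v. u \<in> U \<Longrightarrow> v \<in> U \<Longrightarrow> u * v \<in> U"
    and P: "submod P" "P \<subseteq> Dset" "P \<inter> U = {}"
    and max: "\<And>A. submod A \<Longrightarrow> A \<subseteq> Dset \<Longrightarrow> P \<subseteq> A \<Longrightarrow> A \<inter> U = {} \<Longrightarrow> A = P"
  shows "prime_ideal P"
  unfolding prime_ideal_def
proof (intro conjI ballI impI)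
  show "submod P" "integral P" "1 \<notin> P"
    using P U(1) by (auto simp: integral_def)
  have meets: "\<exists>p\<in>P. \<exists>d\<in>Dset. p + a * d \<in> U" if a: "a \<in> Dset" "a \<notin> P" for a
  proof -
    let ?A = "ideal_sum P (smult_set a Dset)"
    have sA: "submod ?A"
      using P(1) submod_Dset by (intro submod_ideal_sum submod_smult_set)
    have iA: "?A \<subseteq> Dset"
      using P(2) a(1) by (intro ideal_sum_least submod_Dset) (auto simp: smult_set_def intro: Dset_mult)
    have PA: "P \<subseteq> ?A"
      by (rule ideal_sum_upper1[OF submod_smult_set[OF submod_Dset]])
    have "a \<in> ?A"
      using ideal_sum_upper2[OF P(1)] smult_set_self by blast
    then have "?A \<noteq> P"
      using a(2) by blast
    then have "?A \<inter> U \<noteq> {}"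
      using max[OF sA iA PA] by blast
    then show ?thesis
      by (auto simp: ideal_sum_def smult_set_def)
  qed
  fix a b assume a: "a \<in> Dset" and b: "b \<in> Dset" and ab: "a * b \<in> P"
  show "a \<in> P \<or> b \<in> P"
  proof (rule ccontr)
    assume "\<not> (a \<in> P \<or> b \<in> P)"
    then obtain p1 d1 p2 d2 where p1: "p1 \<in> P" "d1 \<in> Dset" "p1 + a * d1 \<in> U"
      and p2: "p2 \<in> P" "d2 \<in> Dset" "p2 + b * d2 \<in> U"
      using meets[OF a] meets[OF b] by blast
    have "p2 + b * d2 \<in> Dset"
      using p2 b P(2) by (blast intro: Dset_add Dset_mult)
    then have "(p2 + b * d2) * p1 \<in> P" "(a * d1) * p2 \<in> P" "(d1 * d2) * (a * b) \<in> P"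
      using P(1) p1 p2 a ab by (simp_all add: submod_mult Dset_mult)
    then have "(p2 + b * d2) * p1 + (a * d1) * p2 + (d1 * d2) * (a * b) \<in> P"
      using P(1) by (simp add: submod_add)
    moreover have "(p1 + a * d1) * (p2 + b * d2) = (p2 + b * d2) * p1 + (a * d1) * p2 + (d1 * d2) * (a * b)"
      by (simp add: algebra_simps)
    moreover have "(p1 + a * d1) * (p2 + b * d2) \<in> U"
      using U(2) p1(3) p2(3) by blast
    ultimately show False
      using P(3) by auto
  qed
qed

text \<open>Without a nonzero prime ideal inside \<open>M \<inter> N\<close>, the ideal maximal among those
  containing \<open>x\<close> and missing \<open>(D - M)(D - N)\<close> would be such a prime; so \<open>xD\<close> must
  meet this multiplicative set.\<close>

lemma principal_meets_prime_complements:
  assumes M: "prime_ideal M" and N: "prime_ideal N" and x: "x \<in> Dset" "x \<noteq> 0"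
    and no_prime: "\<not> (\<exists>R. nonzero_prime_ideal R \<and> R \<subseteq> M \<inter> N)"
  shows "\<exists>s\<in>Dset. \<exists>t\<in>Dset. s \<notin> M \<and> t \<notin> N \<and> s * t \<in> smult_set x Dset"
proof (rule ccontr)
  let ?U = "{s * t | s t. s \<in> Dset \<and> t \<in> Dset \<and> s \<notin> M \<and> t \<notin> N}"
  have one: "1 \<in> ?U"
    using M N by (force simp: prime_ideal_def)
  have mult: "u * v \<in> ?U" if uv: "u \<in> ?U" "v \<in> ?U" for u v
  proof -
    obtain s t s' t' where "s \<in> Dset" "t \<in> Dset" "s \<notin> M" "t \<notin> N" "u = s * t"
      "s' \<in> Dset" "t' \<in> Dset" "s' \<notin> M" "t' \<notin> N" "v = s' * t'"
      using uv by blast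
    moreover have "u * v = (s * s') * (t * t')"
      using calculation by (simp add: algebra_simps)
    ultimately show ?thesis
      using prime_ideal_mult_notin[OF M, of s s'] prime_ideal_mult_notin[OF N, of t t']
        Dset_mult[of s s'] Dset_mult[of t t'] by blast
  qed
  have "smult_set x Dset \<subseteq> Dset"
    using x(1) by (auto simp: smult_set_def intro: Dset_mult)
  moreover assume "\<not> ?thesis"
  then have "smult_set x Dset \<inter> ?U = {}"
    by blast
  ultimately obtain P where P: "submod P" "P \<subseteq> Dset" "smult_set x Dset \<subseteq> P" "P \<inter> ?U = {}"
    and max: "\<And>A. submod A \<Longrightarrow> A \<subseteq> Dset \<Longrightarrow> P \<subseteq> A \<Longrightarrow> A \<inter> ?U = {} \<Longrightarrow> A = P"
    by (rule exists_max_disjoint_ideal[OF submod_smult_set[OF submod_Dset]]) (rule that)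
  have "prime_ideal P"
    using one mult P(1,2,4) max by (rule prime_ideal_if_max_disjoint)
  moreover have "P \<noteq> {0}"
    using P(3) smult_set_self x(2) by blast
  moreover have "P \<subseteq> M \<inter> N"
  proof
    fix p assume "p \<in> P"
    then have "p \<in> Dset" "p * 1 \<notin> ?U" "1 * p \<notin> ?U"
      using P(2,4) by auto
    moreover have "1 \<notin> M" "1 \<notin> N"
      using M N by (simp_all add: prime_ideal_def)
    ultimately show "p \<in> M \<inter> N"
      using Dset_1 by blast
  qed
  ultimately show False
    using no_prime nonzero_prime_ideal_iff by blast
qed

subsection \<open>Star operations\<close>

definition max_star_ideals_over :: "('a::idom fract set \<Rightarrow> 'a fract set) \<Rightarrow> 'a fract \<Rightarrow> 'a fract set set" where
  "max_star_ideals_over st x = {M. max_star_ideal st M \<and> x \<in> M}"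

definition proper_ft_star_ideal :: "('a::idom fract set \<Rightarrow> 'a fract set) \<Rightarrow> 'a fract set \<Rightarrow> bool" where
  "proper_ft_star_ideal st J \<longleftrightarrow> integral J \<and> star_ideal st J \<and> finite_type st J \<and> J \<noteq> Dset"

lemma star_homog_iff:
  "star_homog st I \<longleftrightarrow> proper_ft_star_ideal st I \<and>
     (\<forall>J L. proper_ft_star_ideal st J \<and> I \<subseteq> J \<and> proper_ft_star_ideal st L \<and> I \<subseteq> L \<longrightarrow>
        st (ideal_sum J L) \<noteq> Dset)"
  unfolding star_homog_def proper_ft_star_ideal_def by blast

lemma proper_ft_star_ideal_int_ideal: "proper_ft_star_ideal st J \<Longrightarrow> int_ideal J"
  by (simp add: proper_ft_star_ideal_def star_ideal_def int_ideal_def)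

lemma star_homog_int_ideal: "star_homog st I \<Longrightarrow> int_ideal I"
  using proper_ft_star_ideal_int_ideal star_homog_iff by blast

locale star_op =
  fixes st :: "'a::idom fract set \<Rightarrow> 'a fract set"
  assumes star_operation: "star_operation st"
begin

lemma st_frac_ideal: "frac_ideal I \<Longrightarrow> frac_ideal (st I)"
  and st_principal: "x \<noteq> 0 \<Longrightarrow> st (smult_set x Dset) = smult_set x Dset"
  and st_smult_set: "x \<noteq> 0 \<Longrightarrow> frac_ideal I \<Longrightarrow> st (smult_set x I) = smult_set x (st I)"
  and st_mono: "frac_ideal I \<Longrightarrow> frac_ideal J \<Longrightarrow> I \<subseteq> J \<Longrightarrow> st I \<subseteq> st J"
  and st_extensive: "frac_ideal I \<Longrightarrow> I \<subseteq> st I"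
  and st_idem: "frac_ideal I \<Longrightarrow> st (st I) = st I"
  using star_operation by (simp_all add: star_operation_def)

lemma st_Dset: "st Dset = Dset"
  using st_principal[of 1] by simp

lemma st_submod: "frac_ideal I \<Longrightarrow> submod (st I)"
  by (simp add: st_frac_ideal frac_ideal_submod)

lemma star_ideal_st: "frac_ideal I \<Longrightarrow> star_ideal st (st I)"
  by (simp add: star_ideal_def st_frac_ideal st_idem)

lemma st_int_ideal: "int_ideal I \<Longrightarrow> int_ideal (st I)"
  using st_mono[OF _ frac_ideal_Dset, of I] st_frac_ideal
  by (auto simp: int_ideal_def integral_def st_Dset)

lemma st_subset_st: "frac_ideal I \<Longrightarrow> frac_ideal J \<Longrightarrow> I \<subseteq> st J \<Longrightarrow> st I \<subseteq> st J"
  using st_mono[of I "st J"] by (simp add: st_frac_ideal st_idem)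

lemma st_ideal_prod_st_left:
  assumes A: "int_ideal A" and B: "int_ideal B"
  shows "st (ideal_prod (st A) B) = st (ideal_prod A B)"
proof
  have AB: "int_ideal (ideal_prod A B)" and SB: "int_ideal (ideal_prod (st A) B)"
    using assms int_ideal_ideal_prod st_int_ideal by blast+
  then show "st (ideal_prod A B) \<subseteq> st (ideal_prod (st A) B)"
    using A by (intro st_mono ideal_prod_mono st_extensive) (auto simp: int_ideal_def)
  have "ideal_prod (st A) B \<subseteq> st (ideal_prod A B)"
  proof -
    have "a * b \<in> st (ideal_prod A B)" if a: "a \<in> st A" and b: "b \<in> B" for a b
    proof (cases "b = 0")
      case False
      have "smult_set b A \<subseteq> ideal_prod A B"
        using b int_ideal_submod[OF B] by (auto simp: smult_set_def mult.commute intro: ideal_prod_memI)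
      then have "st (smult_set b A) \<subseteq> st (ideal_prod A B)"
        using False A AB by (intro st_mono frac_ideal_smult_set) (auto simp: int_ideal_def)
      moreover have "b * a \<in> st (smult_set b A)"
        using st_smult_set[OF False] A a smult_setI by (auto simp: int_ideal_def)
      ultimately show ?thesis
        by (simp add: mult.commute subset_iff)
    qed (use AB in \<open>simp add: int_ideal_def st_submod submod_0\<close>)
    then have "st A * B \<subseteq> st (ideal_prod A B)"
      by (auto elim!: set_times_elim)
    then show ?thesis
      using AB ideal_prod_eq_hull[OF int_ideal_submod[OF B], of "st A"]
      by (simp add: int_ideal_def st_submod hull_minimal)
  qed
  then show "st (ideal_prod (st A) B) \<subseteq> st (ideal_prod A B)"
    using AB SB by (intro st_subset_st) (auto simp: int_ideal_def)
qed

lemma st_ideal_prod_st_right: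
  "int_ideal A \<Longrightarrow> int_ideal B \<Longrightarrow> st (ideal_prod A (st B)) = st (ideal_prod A B)"
  using st_ideal_prod_st_left[of B A] st_int_ideal[of B]
  by (simp add: ideal_prod_commute int_ideal_submod)

lemma st_ideal_prod_list_map_st:
  "\<forall>I\<in>set Is. int_ideal I \<Longrightarrow> st (ideal_prod_list (map st Is)) = st (ideal_prod_list Is)"
proof (induction Is)
  case (Cons I Is)
  let ?P = "ideal_prod_list (map st Is)" and ?Q = "ideal_prod_list Is"
  have I: "int_ideal I" and P: "int_ideal ?P" and Q: "int_ideal ?Q"
    using Cons.prems st_int_ideal by (auto intro!: int_ideal_ideal_prod_list)
  have "st (ideal_prod (st I) ?P) = st (ideal_prod I (st ?P))"
    using st_ideal_prod_st_left[OF I P] st_ideal_prod_st_right[OF I P] by simp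
  also have "\<dots> = st (ideal_prod I ?Q)"
    using Cons st_ideal_prod_st_right[OF I Q] by simp
  finally show ?case
    by (simp add: ideal_prod_list_def)
qed simp

lemma max_star_ideal_int_ideal: "max_star_ideal st M \<Longrightarrow> int_ideal M"
  and max_star_ideal_st_eq: "max_star_ideal st M \<Longrightarrow> st M = M"
  and max_star_ideal_one_notin: "max_star_ideal st M \<Longrightarrow> 1 \<notin> M"
  by (auto simp: max_star_ideal_def star_ideal_def int_ideal_def
      dest: submod_eq_DsetI[OF frac_ideal_submod])

lemma max_star_ideal_submod: "max_star_ideal st M \<Longrightarrow> submod M"
  by (simp add: max_star_ideal_int_ideal int_ideal_submod)

lemma max_star_ideal_eqI:
  "max_star_ideal st M \<Longrightarrow> int_ideal N \<Longrightarrow> st N = N \<Longrightarrow> N \<noteq> Dset \<Longrightarrow> M \<subseteq> N \<Longrightarrow> N = M"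
  by (simp add: max_star_ideal_def star_ideal_def int_ideal_def)

lemma max_star_ideal_st_eq_Dset:
  assumes M: "max_star_ideal st M" and A: "int_ideal A" "M \<subseteq> A" "\<not> A \<subseteq> M"
  shows "st A = Dset"
proof (rule ccontr)
  have "A \<subseteq> st A"
    using A by (simp add: int_ideal_def st_extensive)
  moreover assume "st A \<noteq> Dset"
  then have "st A = M"
    using max_star_ideal_eqI[OF M st_int_ideal[OF A(1)]] A \<open>A \<subseteq> st A\<close>
    by (simp add: int_ideal_def st_idem)
  ultimately show False
    using A(3) by simp
qed

lemma max_star_ideal_prime:
  assumes M: "max_star_ideal st M"
  shows "prime_ideal M"
  unfolding prime_ideal_def
proof (intro conjI ballI impI)
  show "submod M" "integral M" "1 \<notin> M"
    using M max_star_ideal_int_ideal max_star_ideal_one_notin by (auto simp: int_ideal_def int_ideal_submod)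
  fix a b assume a: "a \<in> Dset" and b: "b \<in> Dset" and ab: "a * b \<in> M"
  show "a \<in> M \<or> b \<in> M"
  proof (rule ccontr)
    assume "\<not> (a \<in> M \<or> b \<in> M)"
    then have "a \<notin> M" "b \<notin> M" by auto
    have iM: "int_ideal M" and sM: "submod M"
      using M by (simp_all add: max_star_ideal_int_ideal max_star_ideal_submod)
    have "a \<noteq> 0" "b \<noteq> 0"
      using \<open>a \<notin> M\<close> \<open>b \<notin> M\<close> submod_0[OF sM] by auto
    define A where "A = ideal_sum M (smult_set a Dset)"
    have iA: "int_ideal A"
      unfolding A_def using iM int_ideal_principal[OF a \<open>a \<noteq> 0\<close>] by (rule int_ideal_ideal_sum)
    have "a \<in> A"
      unfolding A_def using ideal_sum_upper2[OF sM] smult_set_self by blast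
    then have "st A = Dset"
      using max_star_ideal_st_eq_Dset[OF M iA] ideal_sum_upper1[OF submod_smult_set[OF submod_Dset]]
        \<open>a \<notin> M\<close> by (auto simp: A_def)
    then have "b \<in> st (smult_set b A)"
      using st_smult_set[OF \<open>b \<noteq> 0\<close>] iA smult_setI[OF Dset_1, of b] by (simp add: int_ideal_def)
    moreover have "smult_set b A \<subseteq> M"
    proof
      fix z assume "z \<in> smult_set b A"
      then obtain m e where "m \<in> M" "e \<in> Dset" "z = b * m + e * (a * b)"
        by (auto simp: A_def smult_set_def ideal_sum_def algebra_simps)
      then show "z \<in> M"
        using ab b sM by (auto intro: submod_add submod_mult)
    qed
    then have "st (smult_set b A) \<subseteq> M"
      using iA iM \<open>b \<noteq> 0\<close> max_star_ideal_st_eq[OF M]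
      by (metis int_ideal_def frac_ideal_smult_set st_mono)
    ultimately show False
      using \<open>b \<notin> M\<close> by auto
  qed
qed

lemma max_star_ideals_comaximal:
  assumes P: "max_star_ideal st P" and Q: "max_star_ideal st Q" and "P \<noteq> Q"
  shows "st (ideal_sum P Q) = Dset"
proof (rule max_star_ideal_st_eq_Dset[OF P])
  have sP: "submod P" and sQ: "submod Q"
    using P Q by (simp_all add: max_star_ideal_submod)
  show "int_ideal (ideal_sum P Q)"
    using P Q by (simp add: int_ideal_ideal_sum max_star_ideal_int_ideal)
  show "P \<subseteq> ideal_sum P Q"
    using sQ by (rule ideal_sum_upper1)
  have "\<not> Q \<subseteq> P"
    using max_star_ideal_eqI[OF Q max_star_ideal_int_ideal[OF P] max_star_ideal_st_eq[OF P]]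
      max_star_ideal_one_notin[OF P] \<open>P \<noteq> Q\<close> by (metis Dset_1)
  then show "\<not> ideal_sum P Q \<subseteq> P"
    using ideal_sum_upper2[OF sP] by blast
qed

lemma proper_ft_star_ideal_st_gen:
  assumes T: "int_ideal (gen T)" "finite T" and P: "max_star_ideal st P" "T \<subseteq> P"
  shows "proper_ft_star_ideal st (st (gen T))" "st (gen T) \<subseteq> P"
proof -
  have "gen T \<subseteq> P"
    using gen_least[OF T(2) P(2) max_star_ideal_submod[OF P(1)]] .
  then show "st (gen T) \<subseteq> P"
    using st_mono[OF _ _ \<open>gen T \<subseteq> P\<close>] T(1) max_star_ideal_int_ideal[OF P(1)] max_star_ideal_st_eq[OF P(1)]
    by (simp add: int_ideal_def)
  then have "st (gen T) \<noteq> Dset"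
    using max_star_ideal_one_notin[OF P(1)] by auto
  moreover have "finite_type st (st (gen T))"
    using T by (auto simp: finite_type_def fin_gen_def int_ideal_def)
  ultimately show "proper_ft_star_ideal st (st (gen T))"
    using st_int_ideal[OF T(1)] star_ideal_st T(1)
    by (simp add: proper_ft_star_ideal_def int_ideal_def)
qed

lemma proper_ft_star_ideal_enlarge:
  assumes T: "finite T" "frac_ideal (gen T)" and M: "max_star_ideal st M" "st (gen T) \<subseteq> M"
    and V: "finite V" "V \<subseteq> M"
  shows "proper_ft_star_ideal st (st (gen (T \<union> V)))" "st (gen T) \<subseteq> st (gen (T \<union> V))"
    "V \<subseteq> st (gen (T \<union> V))"
proof -
  have fin: "finite (T \<union> V)"
    using T(1) V(1) by simp
  have "T \<subseteq> M"
    using gen_subset[OF T(1)] st_extensive[OF T(2)] M(2) by blast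
  then have sub: "T \<union> V \<subseteq> M"
    using V(2) by blast
  have TV: "gen T \<subseteq> gen (T \<union> V)"
    using gen_mono[OF fin] by blast
  obtain a where "a \<in> gen T" "a \<noteq> 0"
    using frac_ideal_nonzero[OF T(2)] by blast
  moreover have "T \<union> V \<subseteq> Dset"
    using sub max_star_ideal_int_ideal[OF M(1)] by (auto simp: int_ideal_def integral_def)
  ultimately have iTV: "int_ideal (gen (T \<union> V))"
    using int_ideal_gen[OF fin] TV by blast
  show "proper_ft_star_ideal st (st (gen (T \<union> V)))"
    using proper_ft_star_ideal_st_gen(1)[OF iTV fin M(1) sub] .
  show "st (gen T) \<subseteq> st (gen (T \<union> V))"
    using st_mono[OF T(2) _ TV] iTV by (simp add: int_ideal_def)
  show "V \<subseteq> st (gen (T \<union> V))"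
    using gen_subset[OF fin] st_extensive iTV by (auto simp: int_ideal_def)
qed

end

locale finite_star_op = star_op +
  assumes finite_character: "finite_character st"
begin

lemma finite_characterE:
  assumes "frac_ideal I" "z \<in> st I"
  obtains S where "finite S" "S \<subseteq> I" "frac_ideal (gen S)" "z \<in> st (gen S)"
proof -
  have "z \<in> \<Union>{st J | J. frac_ideal J \<and> fin_gen J \<and> J \<subseteq> I}"
    using assms finite_character unfolding finite_character_def by simp
  then obtain J where J: "frac_ideal J" "fin_gen J" "J \<subseteq> I" "z \<in> st J"
    by blast
  then obtain S where S: "finite S" "J = gen S"
    by (auto simp: fin_gen_def)
  show thesis
  proof (rule that)
    show "S \<subseteq> I"
      using gen_subset[OF S(1)] J(3) S(2) by blast
  qed (use S J in simp_all)
qed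

lemma proper_star_ideal_Union_chain:
  assumes C: "C \<noteq> {}" "subset.chain {N. submod N} C"
    and CX: "\<And>X. X \<in> C \<Longrightarrow> int_ideal X \<and> st X = X \<and> X \<noteq> Dset"
  shows "int_ideal (\<Union>C)" "st (\<Union>C) = \<Union>C" "\<Union>C \<noteq> Dset"
proof -
  obtain X0 where "X0 \<in> C"
    using C(1) by blast
  moreover obtain a where "a \<in> X0" "a \<noteq> 0"
    using CX[OF \<open>X0 \<in> C\<close>] frac_ideal_nonzero by (auto simp: int_ideal_def)
  ultimately have "a \<in> \<Union>C" "a \<noteq> 0"
    by blast+
  moreover have "\<Union>C \<subseteq> Dset"
    using CX by (auto simp: int_ideal_def integral_def)
  ultimately show iU: "int_ideal (\<Union>C)"
    using int_idealI[OF submod_Union_chain[OF C(2,1)]] by blast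
  have "st (\<Union>C) \<subseteq> \<Union>C"
  proof
    fix z assume "z \<in> st (\<Union>C)"
    with iU obtain S where S: "finite S" "S \<subseteq> \<Union>C" "frac_ideal (gen S)" "z \<in> st (gen S)"
      unfolding int_ideal_def using finite_characterE by blast
    obtain X where X: "X \<in> C" "S \<subseteq> X"
      using finite_subset_Union_chain[OF S(1,2) C(1,2)] by blast
    have "frac_ideal X" "submod X" "st X = X"
      using CX[OF X(1)] by (simp_all add: int_ideal_def frac_ideal_submod)
    then have "st (gen S) \<subseteq> X"
      using st_mono[OF S(3) _ gen_least[OF S(1) X(2)]] by simp
    with S(4) X(1) show "z \<in> \<Union>C"
      by blast
  qed
  then show "st (\<Union>C) = \<Union>C"
    using iU st_extensive[of "\<Union>C"] by (simp add: int_ideal_def)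
  show "\<Union>C \<noteq> Dset"
  proof
    assume "\<Union>C = Dset"
    then obtain X where X: "X \<in> C" "1 \<in> X"
      using Dset_1 by blast
    then show False
      using CX[OF X(1)] submod_eq_DsetI[OF int_ideal_submod, of X] by (simp add: int_ideal_def)
  qed
qed

lemma exists_max_star_ideal:
  assumes I: "int_ideal I" "st I \<noteq> Dset"
  shows "\<exists>M. max_star_ideal st M \<and> I \<subseteq> M"
proof -
  let ?F = "{N. int_ideal N \<and> st N = N \<and> N \<noteq> Dset \<and> I \<subseteq> N}"
  have "st I \<in> ?F"
    using I st_int_ideal st_extensive st_idem by (simp add: int_ideal_def)
  then have "?F \<noteq> {}"
    by blast
  moreover have "\<Union>C \<in> ?F" if C: "C \<noteq> {}" "subset.chain ?F C" for C
  proof -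
    have CX: "int_ideal X \<and> st X = X \<and> X \<noteq> Dset" "I \<subseteq> X" if "X \<in> C" for X
      using C(2) that by (auto simp: subset.chain_def)
    have "C \<subseteq> {N. submod N}"
      using CX(1) int_ideal_submod by blast
    then have "subset.chain {N. submod N} C"
      using C(2) by (simp add: subset.chain_def)
    moreover have "I \<subseteq> \<Union>C"
      using C(1) CX(2) by blast
    ultimately show ?thesis
      using proper_star_ideal_Union_chain[OF C(1) _ CX(1)] by simp
  qed
  ultimately have "\<exists>M\<in>?F. \<forall>X\<in>?F. M \<subseteq> X \<longrightarrow> X = M"
    by (rule subset_Zorn_nonempty)
  then obtain M where M: "M \<in> ?F" "\<forall>X\<in>?F. M \<subseteq> X \<longrightarrow> X = M"
    by (elim bexE)
  have "max_star_ideal st M"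
    unfolding max_star_ideal_def star_ideal_def
  proof (intro conjI allI impI)
    show "integral M" "frac_ideal M" "st M = M" "M \<noteq> Dset"
      using M(1) by (simp_all add: int_ideal_def)
    fix N assume N: "integral N \<and> (frac_ideal N \<and> st N = N) \<and> N \<noteq> Dset \<and> M \<subseteq> N"
    have "I \<subseteq> N"
      using M(1) N by blast
    with N have "N \<in> ?F"
      by (simp add: int_ideal_def)
    with M(2) N show "N = M"
      by blast
  qed
  with M(1) show ?thesis
    by blast
qed

lemma st_eq_DsetI:
  assumes "int_ideal A" "\<And>M. max_star_ideal st M \<Longrightarrow> \<not> A \<subseteq> M"
  shows "st A = Dset"
proof (rule ccontr)
  assume "st A \<noteq> Dset"
  from exists_max_star_ideal[OF assms(1) this]
  obtain M where "max_star_ideal st M" "A \<subseteq> M"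
    by (elim exE conjE)
  with assms(2) show False
    by simp
qed

lemma mem_principal_if_local:
  assumes x: "x \<in> Dset" "x \<noteq> 0" and p: "p \<in> Dset"
    and local: "\<And>M. max_star_ideal st M \<Longrightarrow> x \<in> M \<Longrightarrow> \<exists>s\<in>Dset. s \<notin> M \<and> s * p \<in> smult_set x Dset"
  shows "p \<in> smult_set x Dset"
proof (cases "p = 0")
  case True
  then show ?thesis
    using submod_0[OF submod_smult_set[OF submod_Dset]] by simp
next
  case False
  define z where "z = x / p"
  have z: "z \<noteq> 0" "z * p = x"
    using x False by (simp_all add: z_def)
  define C where "C = Dset \<inter> smult_set z Dset"
  have "x \<in> C"
    using x(1) smult_setI[OF p, of z] z(2) by (simp add: C_def)
  have iC: "int_ideal C"
    using submod_Inter[of "{Dset, smult_set z Dset}"] submod_Dset submod_smult_set[OF submod_Dset]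
    by (intro int_idealI[OF _ _ \<open>x \<in> C\<close> x(2)]) (auto simp: C_def)
  have "st C = Dset"
  proof (rule st_eq_DsetI[OF iC])
    fix M assume M: "max_star_ideal st M"
    show "\<not> C \<subseteq> M"
    proof
      assume "C \<subseteq> M"
      then obtain s where s: "s \<in> Dset" "s \<notin> M" "s * p \<in> smult_set x Dset"
        using local[OF M] \<open>x \<in> C\<close> by blast
      then obtain e where "e \<in> Dset" "s * p = x * e"
        by (auto simp: smult_set_def)
      then have "s = z * e"
        using False by (simp add: z_def field_simps)
      then have "s \<in> smult_set z Dset"
        using smult_setI[OF \<open>e \<in> Dset\<close>] by simp
      with s \<open>C \<subseteq> M\<close> show False
        by (auto simp: C_def)
    qed
  qed
  moreover have "st C \<subseteq> smult_set z Dset"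
    using st_mono[of C "smult_set z Dset"] iC frac_ideal_smult_set[OF frac_ideal_Dset z(1)] st_principal[OF z(1)]
    by (auto simp: C_def int_ideal_def)
  ultimately have "1 \<in> smult_set z Dset"
    by auto
  then obtain e where "e \<in> Dset" "1 = z * e"
    by (auto simp: smult_set_def)
  then show ?thesis
    using smult_setI[of e Dset x] z False by (simp add: z_def field_simps)
qed

lemma mem_st_if_local:
  assumes x: "x \<in> Dset" "x \<noteq> 0" and P: "int_ideal P" "P \<subseteq> smult_set x Dset" "x ^ k \<in> P"
    and local: "\<And>M. max_star_ideal st M \<Longrightarrow> x \<in> M \<Longrightarrow> \<exists>q\<in>Dset. q \<notin> M \<and> x * q \<in> P"
  shows "x \<in> st P"
proof -
  define y where "y = 1 / x"
  have y: "y \<noteq> 0" "y * x = 1"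
    using x(2) by (simp_all add: y_def)
  define B where "B = smult_set y P"
  have "B \<subseteq> smult_set y (smult_set x Dset)"
    using P(2) by (simp add: B_def smult_set_mono)
  then have "B \<subseteq> Dset"
    by (simp add: smult_set_smult_set y(2))
  then have iB: "int_ideal B"
    using frac_ideal_smult_set[OF _ y(1)] P(1) by (simp add: B_def int_ideal_def integral_def)
  have "st B = Dset"
  proof (rule st_eq_DsetI[OF iB])
    fix M assume M: "max_star_ideal st M"
    show "\<not> B \<subseteq> M"
    proof
      assume "B \<subseteq> M"
      have "y * x ^ k \<in> M"
        using \<open>B \<subseteq> M\<close> smult_setI[OF P(3)] by (auto simp: B_def)
      then have "x * (y * x ^ k) \<in> M"
        using submod_mult[OF max_star_ideal_submod[OF M] x(1)] by blast
      then have "x \<in> M"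
        using prime_ideal_power[OF max_star_ideal_prime[OF M] x(1)] y(2)
        by (simp add: mult.assoc[symmetric] mult.commute[of x])
      then obtain q where "q \<notin> M" "x * q \<in> P"
        using local[OF M] by blast
      moreover have "y * (x * q) = q"
        using y(2) by (simp add: mult.assoc[symmetric])
      ultimately have "q \<in> B"
        using smult_setI[of "x * q" P y] unfolding B_def by metis
      with \<open>B \<subseteq> M\<close> \<open>q \<notin> M\<close> show False
        by blast
    qed
  qed
  then have "1 \<in> smult_set y (st P)"
    using st_smult_set[OF y(1)] P(1) by (simp add: B_def int_ideal_def)
  then obtain z where "z \<in> st P" "1 = y * z"
    by (auto simp: smult_set_def)
  then show ?thesis
    using x(2) by (simp add: y_def field_simps)
qed

text \<open>If a homogeneous ideal \<open>I = st (gen T)\<close> lay in two maximal star ideals \<open>P \<noteq> Q\<close>,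
  write \<open>1 \<in> st (gen S)\<close> with \<open>S \<subseteq> P + Q\<close> finite; splitting each \<open>s \<in> S\<close> as \<open>p + q\<close>
  enlarges \<open>I\<close> to proper finite-type star ideals inside \<open>P\<close> and \<open>Q\<close> whose sum is not proper.\<close>

lemma star_homog_unique_max_star_ideal:
  assumes H: "star_homog st I" and P: "max_star_ideal st P" "I \<subseteq> P"
    and Q: "max_star_ideal st Q" "I \<subseteq> Q"
  shows "P = Q"
proof (rule ccontr)
  assume "P \<noteq> Q"
  have iPQ: "int_ideal (ideal_sum P Q)"
    using P Q by (simp add: int_ideal_ideal_sum max_star_ideal_int_ideal)
  have "1 \<in> st (ideal_sum P Q)"
    using max_star_ideals_comaximal[OF P(1) Q(1) \<open>P \<noteq> Q\<close>] by simp
  then obtain S where S: "finite S" "S \<subseteq> ideal_sum P Q" "frac_ideal (gen S)" "1 \<in> st (gen S)"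
    using iPQ finite_characterE unfolding int_ideal_def by blast
  then have "\<forall>s\<in>S. \<exists>pq. fst pq \<in> P \<and> snd pq \<in> Q \<and> s = fst pq + snd pq"
    by (force simp: ideal_sum_def)
  then obtain f where f: "\<And>s. s \<in> S \<Longrightarrow> fst (f s) \<in> P \<and> snd (f s) \<in> Q \<and> s = fst (f s) + snd (f s)"
    by metis
  obtain T where T: "finite T" "frac_ideal (gen T)" "I = st (gen T)"
    using H by (auto simp: star_homog_def finite_type_def fin_gen_def)
  define J where "J = st (gen (T \<union> (fst \<circ> f) ` S))"
  define L where "L = st (gen (T \<union> (snd \<circ> f) ` S))"
  have J: "proper_ft_star_ideal st J" "I \<subseteq> J" "(fst \<circ> f) ` S \<subseteq> J"
    using proper_ft_star_ideal_enlarge[OF T(1,2) P(1), of "(fst \<circ> f) ` S"] T(3) P(2) f S(1)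
    unfolding J_def by auto
  have L: "proper_ft_star_ideal st L" "I \<subseteq> L" "(snd \<circ> f) ` S \<subseteq> L"
    using proper_ft_star_ideal_enlarge[OF T(1,2) Q(1), of "(snd \<circ> f) ` S"] T(3) Q(2) f S(1)
    unfolding L_def by auto
  have iJL: "int_ideal (ideal_sum J L)"
    using J(1) L(1) by (simp add: int_ideal_ideal_sum proper_ft_star_ideal_int_ideal)
  have "S \<subseteq> ideal_sum J L"
    using f J(3) L(3) unfolding ideal_sum_def by force
  then have "gen S \<subseteq> ideal_sum J L"
    using gen_least[OF S(1)] iJL int_ideal_submod by blast
  then have "1 \<in> st (ideal_sum J L)"
    using st_mono[OF S(3)] iJL S(4) by (auto simp: int_ideal_def)
  then have "st (ideal_sum J L) = Dset"
    using st_int_ideal[OF iJL] submod_eq_DsetI[OF int_ideal_submod, of "st (ideal_sum J L)"]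
    by (simp add: int_ideal_def)
  moreover have "st (ideal_sum J L) \<noteq> Dset"
    using H J(1,2) L(1,2) unfolding star_homog_iff by blast
  ultimately show False
    by simp
qed
lemma star_SH_factorsE:
  assumes "star_SH st" "x \<noteq> 0" "\<not> x dvd 1"
  obtains Is where "\<forall>I\<in>set Is. star_homog st I"
    "\<And>P. prime_ideal P \<Longrightarrow> emb x \<in> P \<Longrightarrow> \<exists>I\<in>set Is. I \<subseteq> P"
proof -
  obtain Is where Is: "\<forall>I\<in>set Is. star_homog st I" "smult_set (emb x) Dset = st (ideal_prod_list Is)"
    using assms unfolding star_SH_def by blast
  have iI: "\<forall>I\<in>set Is. int_ideal I"
    using Is(1) star_homog_int_ideal by blast
  have "ideal_prod_list Is \<subseteq> smult_set (emb x) Dset"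
    using Is(2) st_extensive int_ideal_ideal_prod_list[OF iI] by (simp add: int_ideal_def)
  moreover have "smult_set (emb x) Dset \<subseteq> P" if "prime_ideal P" "emb x \<in> P" for P
    using that principal_subset[of P] by (simp add: prime_ideal_def)
  ultimately have "\<exists>I\<in>set Is. I \<subseteq> P" if "prime_ideal P" "emb x \<in> P" for P
    using prime_ideal_ideal_prod_list[OF that(1) iI] that by blast
  with Is(1) show thesis
    by (rule that)
qed

lemma star_SH_imp_finite_star_character:
  assumes "star_SH st"
  shows "finite_star_character st"
  unfolding finite_star_character_def
proof (intro allI impI)
  fix x :: 'a assume x: "x \<noteq> 0" "\<not> x dvd 1"
  obtain Is where Is: "\<forall>I\<in>set Is. star_homog st I"
    "\<And>P. prime_ideal P \<Longrightarrow> emb x \<in> P \<Longrightarrow> \<exists>I\<in>set Is. I \<subseteq> P"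
    using star_SH_factorsE[OF assms x] by blast
  have "{M. max_star_ideal st M \<and> emb x \<in> M} \<subseteq> (\<Union>I\<in>set Is. {M. max_star_ideal st M \<and> I \<subseteq> M})"
    using Is(2) max_star_ideal_prime by blast
  moreover have "finite {M. max_star_ideal st M \<and> I \<subseteq> M}" if "I \<in> set Is" for I
  proof (cases "{M. max_star_ideal st M \<and> I \<subseteq> M} = {}")
    case False
    then obtain M0 where "max_star_ideal st M0" "I \<subseteq> M0"
      by blast
    then have "{M. max_star_ideal st M \<and> I \<subseteq> M} \<subseteq> {M0}"
      using star_homog_unique_max_star_ideal Is(1) that by blast
    then show ?thesis
      using finite_subset by blast
  qed (simp only: empty_iff finite.emptyI)
  ultimately show "finite {M. max_star_ideal st M \<and> emb x \<in> M}"
    by (simp add: finite_subset)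
qed

lemma star_SH_imp_no_common_prime:
  assumes "star_SH st" and P: "max_star_ideal st P" and Q: "max_star_ideal st Q" and "P \<noteq> Q"
  shows "\<not> (\<exists>R. nonzero_prime_ideal R \<and> R \<subseteq> P \<inter> Q)"
proof
  assume "\<exists>R. nonzero_prime_ideal R \<and> R \<subseteq> P \<inter> Q"
  then obtain R where R: "prime_ideal R" "R \<noteq> {0}" "R \<subseteq> P \<inter> Q"
    by (auto simp: nonzero_prime_ideal_iff)
  then obtain r where r: "r \<in> R" "r \<noteq> 0"
    by (auto simp: prime_ideal_def dest: submod_0)
  then obtain x where x: "r = emb x" "x \<noteq> 0"
    using R(1) by (auto simp: prime_ideal_def integral_def Dset_def)
  have "\<not> x dvd 1"
  proof
    assume "x dvd 1"
    then obtain k where "1 = x * k"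
      by (elim dvdE)
    then have "emb k * r = 1"
      using x(1) by (simp add: emb_mult mult.commute)
    then show False
      using R(1) r(1) by (metis Dset_emb prime_ideal_def submod_mult)
  qed
  then obtain Is where "\<forall>I\<in>set Is. star_homog st I"
    "\<And>P. prime_ideal P \<Longrightarrow> emb x \<in> P \<Longrightarrow> \<exists>I\<in>set Is. I \<subseteq> P"
    using star_SH_factorsE[OF assms(1) x(2)] by blast
  then obtain I where "star_homog st I" "I \<subseteq> R"
    using R(1) r(1) x(1) by blast
  then show False
    using star_homog_unique_max_star_ideal[OF _ P _ Q] R(3) \<open>P \<noteq> Q\<close> by blast
qed

end

subsection \<open>Factoring a principal ideal into homogeneous ideals\<close>

text \<open>The factor at \<open>M\<close> is generated by \<open>x\<close> and the elements \<open>t M N\<close>, which lie in \<open>M\<close> but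
  not in \<open>N\<close>, so \<open>M\<close> is the only maximal star ideal above it.\<close>

locale principal_decomposition = finite_star_op +
  fixes x :: "'a::idom fract" and s t :: "'a fract set \<Rightarrow> 'a fract set \<Rightarrow> 'a fract"
  assumes x: "x \<in> Dset" "x \<noteq> 0"
    and finite_over: "finite (max_star_ideals_over st x)"
    and separating: "\<And>M N. M \<in> max_star_ideals_over st x \<Longrightarrow> N \<in> max_star_ideals_over st x \<Longrightarrow> M \<noteq> N \<Longrightarrow>
       s M N \<in> Dset \<and> t M N \<in> Dset \<and> s M N \<notin> M \<and> t M N \<notin> N \<and> s M N * t M N \<in> smult_set x Dset"
begin

definition gens :: "'a fract set \<Rightarrow> 'a fract set" where
  "gens M = insert x (t M ` (max_star_ideals_over st x - {M}))"

definition factor :: "'a fract set \<Rightarrow> 'a fract set" where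
  "factor M = st (gen (gens M))"

lemma max_star_ideals_overD:
  "M \<in> max_star_ideals_over st x \<Longrightarrow> max_star_ideal st M \<and> x \<in> M"
  by (simp add: max_star_ideals_over_def)

lemma separator_mem:
  assumes "M \<in> max_star_ideals_over st x" "N \<in> max_star_ideals_over st x" "M \<noteq> N"
  shows "t M N \<in> M"
proof -
  have M: "max_star_ideal st M" "x \<in> M"
    using max_star_ideals_overD[OF assms(1)] by auto
  have "s M N * t M N \<in> M"
    using separating[OF assms] principal_subset[OF max_star_ideal_submod[OF M(1)] M(2)] by blast
  then show ?thesis
    using separating[OF assms] prime_idealD[OF max_star_ideal_prime[OF M(1)]] by blast
qed

lemma finite_gens: "finite (gens M)"
  using finite_over by (simp add: gens_def)

lemma gens_subset_Dset: "M \<in> max_star_ideals_over st x \<Longrightarrow> gens M \<subseteq> Dset"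
  using x separating[of M] by (auto simp: gens_def)

lemma gens_subset: "M \<in> max_star_ideals_over st x \<Longrightarrow> gens M \<subseteq> M"
  using separator_mem max_star_ideals_overD by (auto simp: gens_def)

lemma int_ideal_gen_gens: "M \<in> max_star_ideals_over st x \<Longrightarrow> int_ideal (gen (gens M))"
  using int_ideal_gen[OF finite_gens gens_subset_Dset _ x(2)] gen_subset[OF finite_gens]
  by (auto simp: gens_def)

lemma star_ideal_above_factor_subset:
  assumes M: "M \<in> max_star_ideals_over st x"
    and J: "int_ideal J" "st J = J" "J \<noteq> Dset" "factor M \<subseteq> J"
  shows "J \<subseteq> M"
proof -
  have "st J \<noteq> Dset"
    using J(2,3) by simp
  from exists_max_star_ideal[OF J(1) this]
  obtain N where N: "max_star_ideal st N" "J \<subseteq> N"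
    by (elim exE conjE)
  have "gens M \<subseteq> st (gen (gens M))"
    using gen_subset[OF finite_gens] st_extensive[of "gen (gens M)"] int_ideal_gen_gens[OF M]
    by (auto simp: int_ideal_def)
  then have "gens M \<subseteq> J"
    using J(4) by (simp add: factor_def)
  then have "x \<in> N"
    using N(2) by (auto simp: gens_def)
  then have N_over: "N \<in> max_star_ideals_over st x"
    using N(1) by (simp add: max_star_ideals_over_def)
  have "N = M"
  proof (rule ccontr)
    assume "N \<noteq> M"
    then have "t M N \<in> N"
      using \<open>gens M \<subseteq> J\<close> N(2) N_over by (auto simp: gens_def)
    with separating[OF M N_over] \<open>N \<noteq> M\<close> show False
      by blast
  qed
  with N(2) show ?thesis
    by simp
qed

lemma star_homog_factor:
  assumes "M \<in> max_star_ideals_over st x"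
  shows "star_homog st (factor M)"
  unfolding star_homog_iff
proof (intro conjI allI impI)
  have M: "max_star_ideal st M"
    using max_star_ideals_overD[OF assms] by simp
  show "proper_ft_star_ideal st (factor M)"
    unfolding factor_def
    using proper_ft_star_ideal_st_gen(1)[OF int_ideal_gen_gens[OF assms] finite_gens M gens_subset[OF assms]] .
  fix J L
  assume JL: "proper_ft_star_ideal st J \<and> factor M \<subseteq> J \<and> proper_ft_star_ideal st L \<and> factor M \<subseteq> L"
  have above: "K \<subseteq> M" if "proper_ft_star_ideal st K" "factor M \<subseteq> K" for K
    using star_ideal_above_factor_subset[OF assms proper_ft_star_ideal_int_ideal[OF that(1)] _ _ that(2)]
      that(1) by (simp add: proper_ft_star_ideal_def star_ideal_def)
  have "ideal_sum J L \<subseteq> M"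
    using JL above by (intro ideal_sum_least[OF max_star_ideal_submod[OF M]]) simp_all
  moreover have "int_ideal (ideal_sum J L)"
    using JL by (intro int_ideal_ideal_sum proper_ft_star_ideal_int_ideal[of st]) simp_all
  ultimately have "st (ideal_sum J L) \<subseteq> st M"
    using st_mono max_star_ideal_int_ideal[OF M] by (simp add: int_ideal_def)
  then show "st (ideal_sum J L) \<noteq> Dset"
    using max_star_ideal_st_eq[OF M] max_star_ideal_one_notin[OF M] by auto
qed

lemma prod_gens_subset_principal:
  assumes Ms: "set Ms = max_star_ideals_over st x"
  shows "prod_list (map gens Ms) \<subseteq> smult_set x Dset"
proof
  fix p assume p: "p \<in> prod_list (map gens Ms)"
  have gens_D: "\<And>M. M \<in> set Ms \<Longrightarrow> gens M \<subseteq> Dset"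
    using gens_subset_Dset Ms by blast
  show "p \<in> smult_set x Dset"
  proof (rule mem_principal_if_local[OF x])
    show "p \<in> Dset"
      using prod_list_sets_subset_Dset[of Ms gens] gens_D p by blast
    fix M assume "max_star_ideal st M" "x \<in> M"
    then have M: "M \<in> set Ms"
      using Ms by (simp add: max_star_ideals_over_def)
    then obtain g q where g: "g \<in> gens M" "q \<in> Dset" "p = g * q"
      using prod_list_sets_factor[OF p M gens_D] by blast
    show "\<exists>s\<in>Dset. s \<notin> M \<and> s * p \<in> smult_set x Dset"
    proof (cases "g = x")
      case True
      then show ?thesis
        using g \<open>max_star_ideal st M\<close> max_star_ideal_one_notin smult_setI[OF g(2), of x]
        by (intro bexI[of _ 1]) auto
    next
      case False
      then obtain N where N: "N \<in> max_star_ideals_over st x" "N \<noteq> M" "g = t M N"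
        using g(1) by (auto simp: gens_def)
      have sep: "s M N * t M N \<in> smult_set x Dset" "s M N \<in> Dset" "s M N \<notin> M"
        using separating[of M N] M Ms N(1,2) by auto
      have "s M N * p = q * (s M N * t M N)"
        using g(3) N(3) by (simp add: mult_ac)
      also have "\<dots> \<in> smult_set x Dset"
        using submod_mult[OF submod_smult_set[OF submod_Dset] g(2) sep(1)] .
      finally show ?thesis
        using sep(2,3) by blast
    qed
  qed
qed

lemma mem_st_hull_prod_gens:
  assumes Ms: "set Ms = max_star_ideals_over st x" "distinct Ms"
  shows "x \<in> st (submod hull prod_list (map gens Ms))"
proof (rule mem_st_if_local[OF x])
  let ?P = "prod_list (map gens Ms)"
  have x_gens: "x \<in> gens M" for M
    by (simp add: gens_def)
  show "submod hull ?P \<subseteq> smult_set x Dset"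
    using prod_gens_subset_principal[OF Ms(1)] submod_smult_set[OF submod_Dset]
    by (rule hull_minimal[where S = submod])
  have "x ^ length Ms \<in> ?P"
    using prod_list_mem_prod_list_sets[of Ms "\<lambda>_. x" gens] x_gens by (simp add: map_replicate_const)
  then show "x ^ length Ms \<in> submod hull ?P"
    by (rule hull_inc)
  have "?P \<subseteq> Dset"
    using prod_list_sets_subset_Dset[of Ms gens] gens_subset_Dset Ms(1) by blast
  then show "int_ideal (submod hull ?P)"
    using int_idealI[OF submod_hull hull_minimal[where S = submod, OF _ submod_Dset]
        hull_inc[OF \<open>x ^ length Ms \<in> ?P\<close>]] x(2)
    by simp
  fix M assume "max_star_ideal st M" "x \<in> M"
  then have M: "M \<in> max_star_ideals_over st x"
    by (simp add: max_star_ideals_over_def)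
  define h where "h N = (if N = M then x else t N M)" for N
  define q where "q = (\<Prod>N\<in>max_star_ideals_over st x - {M}. t N M)"
  have "q \<in> Dset \<and> q \<notin> M"
    unfolding q_def using separating M finite_over
    by (intro prime_ideal_prod_notin max_star_ideal_prime \<open>max_star_ideal st M\<close>) auto
  moreover have "x * q \<in> ?P"
  proof -
    have "h N \<in> gens N" for N
      using M by (cases "N = M") (auto simp: h_def gens_def)
    then have "prod_list (map h Ms) \<in> ?P"
      by (rule prod_list_mem_prod_list_sets)
    moreover have "prod_list (map h Ms) = (\<Prod>N\<in>max_star_ideals_over st x. h N)"
      using prod.distinct_set_conv_list[OF Ms(2), of h] Ms(1) by simp
    moreover have "\<dots> = x * q"
      using prod.remove[OF finite_over M, of h] by (simp add: h_def q_def)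
    ultimately show ?thesis
      by simp
  qed
  ultimately show "\<exists>q\<in>Dset. q \<notin> M \<and> x * q \<in> submod hull ?P"
    using hull_inc[of "x * q" ?P submod] by blast
qed

lemma principal_eq_st_prod_factors:
  assumes Ms: "set Ms = max_star_ideals_over st x" "distinct Ms"
  shows "smult_set x Dset = st (ideal_prod_list (map factor Ms))"
proof -
  let ?H = "submod hull prod_list (map gens Ms)"
  have "map factor Ms = map st (map (\<lambda>M. gen (gens M)) Ms)"
    by (simp add: factor_def)
  moreover have "\<forall>I\<in>set (map (\<lambda>M. gen (gens M)) Ms). int_ideal I"
    using int_ideal_gen_gens Ms(1) by auto
  ultimately have "st (ideal_prod_list (map factor Ms)) = st (ideal_prod_list (map (\<lambda>M. gen (gens M)) Ms))"
    using st_ideal_prod_list_map_st by (simp only:)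
  also have "ideal_prod_list (map (\<lambda>M. gen (gens M)) Ms) = ?H"
    using ideal_prod_list_hull[of gens Ms] by (simp add: gen_eq_hull finite_gens)
  finally have eq: "st (ideal_prod_list (map factor Ms)) = st ?H" .
  have iH: "int_ideal ?H"
    using int_ideal_ideal_prod_list[of "map (\<lambda>M. gen (gens M)) Ms"] int_ideal_gen_gens Ms(1)
      ideal_prod_list_hull[of gens Ms] by (simp add: gen_eq_hull finite_gens)
  have "st ?H \<subseteq> st (smult_set x Dset)"
    using st_mono[OF _ frac_ideal_smult_set[OF frac_ideal_Dset x(2)]] iH
      hull_minimal[where S = submod, OF prod_gens_subset_principal[OF Ms(1)] submod_smult_set[OF submod_Dset]]
    by (simp add: int_ideal_def)
  moreover have "smult_set x Dset \<subseteq> st ?H"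
    using principal_subset[OF st_submod mem_st_hull_prod_gens[OF Ms]] iH by (simp add: int_ideal_def)
  ultimately show ?thesis
    using eq st_principal[OF x(2)] by simp
qed

end

context finite_star_op
begin

lemma star_SH_if_no_common_prime:
  assumes fsc: "finite_star_character st"
    and no_prime: "\<forall>P Q. max_star_ideal st P \<and> max_star_ideal st Q \<and> P \<noteq> Q \<longrightarrow>
         \<not> (\<exists>R. nonzero_prime_ideal R \<and> R \<subseteq> P \<inter> Q)"
  shows "star_SH st"
  unfolding star_SH_def
proof (intro allI impI)
  fix x0 :: 'a assume x0: "x0 \<noteq> 0" "\<not> x0 dvd 1"
  define x where "x = emb x0"
  have x: "x \<in> Dset" "x \<noteq> 0"
    using x0 by (simp_all add: x_def)
  have fin: "finite (max_star_ideals_over st x)"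
    using fsc x0 by (simp add: finite_star_character_def max_star_ideals_over_def x_def)
  have "\<exists>p. M \<in> max_star_ideals_over st x \<and> N \<in> max_star_ideals_over st x \<and> M \<noteq> N \<longrightarrow>
      fst p \<in> Dset \<and> snd p \<in> Dset \<and> fst p \<notin> M \<and> snd p \<notin> N \<and> fst p * snd p \<in> smult_set x Dset" for M N
  proof (cases "M \<in> max_star_ideals_over st x \<and> N \<in> max_star_ideals_over st x \<and> M \<noteq> N")
    case True
    then have "max_star_ideal st M" "max_star_ideal st N" "M \<noteq> N"
      by (simp_all add: max_star_ideals_over_def)
    then obtain a b where "a \<in> Dset" "b \<in> Dset" "a \<notin> M" "b \<notin> N" "a * b \<in> smult_set x Dset"
      using principal_meets_prime_complements[OF max_star_ideal_prime max_star_ideal_prime x] no_prime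
      by meson
    then show ?thesis
      by (intro exI[of _ "(a, b)"]) simp
  qed blast
  then obtain f where f: "\<And>M N. M \<in> max_star_ideals_over st x \<Longrightarrow> N \<in> max_star_ideals_over st x \<Longrightarrow> M \<noteq> N \<Longrightarrow>
      fst (f M N) \<in> Dset \<and> snd (f M N) \<in> Dset \<and> fst (f M N) \<notin> M \<and> snd (f M N) \<notin> N \<and>
      fst (f M N) * snd (f M N) \<in> smult_set x Dset"
    by metis
  interpret principal_decomposition st x "\<lambda>M N. fst (f M N)" "\<lambda>M N. snd (f M N)"
    using x fin f by unfold_locales auto
  obtain Ms where "set Ms = max_star_ideals_over st x" "distinct Ms"
    using finite_distinct_list[OF fin] by blast
  then have "(\<forall>I\<in>set (map factor Ms). star_homog st I) \<and>
      smult_set x Dset = st (ideal_prod_list (map factor Ms))"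
    using star_homog_factor principal_eq_st_prod_factors by auto
  then show "\<exists>Is. (\<forall>I\<in>set Is. star_homog st I) \<and> smult_set (emb x0) Dset = st (ideal_prod_list Is)"
    unfolding x_def by blast
qed

end

theorem theoremM:
  fixes st :: "'a::idom fract set \<Rightarrow> 'a fract set"
  assumes "star_operation st"
    and "finite_character st"
  shows "star_SH st \<longleftrightarrow>
     (finite_star_character st \<and>
      (\<forall>P Q. max_star_ideal st P \<and> max_star_ideal st Q \<and> P \<noteq> Q \<longrightarrow>
         \<not> (\<exists>R. nonzero_prime_ideal R \<and> R \<subseteq> P \<inter> Q)))"
proof -
  interpret finite_star_op st
    using assms by unfold_locales
  show ?thesis
    using star_SH_imp_finite_star_character star_SH_imp_no_common_prime star_SH_if_no_common_prime
    by blast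
qed

end
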